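(* Let $\Sigma$ be a finite simplicial complex, let $d\ge0$, and assume $\deg\tau>0$ for all $\tau\in\Sigma_d$. Then $d+2$ is an eigenvalue of the normalized up-Laplacian $\Delta^{up}_d$ if and only if the signed graph $(\Gamma_d,\tilde s)$ has an antibalanced connected component. Moreover, the multiplicity of the eigenvalue $d+2$ equals the number of antibalanced connected components of $(\Gamma_d,\tilde s)$.
   Context: $\Sigma_d$ consists of the $d$-simplices of $\Sigma$ with fixed orientations. $\mathrm{sgn}([\tau],\partial[\sigma])\in\{\pm1\}$ is the coefficient of $[\tau]$ in the simplicial boundary $\partial[\sigma]$ of the oriented $(d+1)$-simplex $\sigma\supset\tau$. $\deg\tau$ is the number of $(d+1)$-simplices containing $\tau$. $\Delta^{up}_d=D^{-1}B_{d+1}B_{d+1}^\top$, where $B_{d+1}$ is the signed $\Sigma_d\times\Sigma_{d+1}$ incidence matrix and $D=\mathrm{diag}(\deg\tau)$; all its eigenvalues lie in $[0,d+2]$. $\Gamma_d$ is the graph on $\Sigma_d$ in which distinct $\tau,\tau'$ are adjacent iff both are facets of some (necessarily unique) $\sigma\in\Sigma_{d+1}$. The sign is $\tilde s(\tau,\tau')=-\mathrm{sgn}([\tau],\partial[\sigma])\,\mathrm{sgn}([\tau'],\partial[\sigma])$. Switching at a vertex means multiplying the signs of all edges at that vertex by $-1$. A signed graph (or a connected component of one) is balanced if after some switchings all edge signs are $+1$, and antibalanced if after some switchings all edge signs are $-1$. *)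

theory Defs
  imports "Jordan_Normal_Form.Char_Poly"
begin

definition simplicial_complex :: "'a set set \<Rightarrow> bool" where
  "simplicial_complex \<Sigma> \<longleftrightarrow> finite \<Sigma> \<and>
     (\<forall>\<sigma>\<in>\<Sigma>. finite \<sigma> \<and> \<sigma> \<noteq> {}) \<and>
     (\<forall>\<sigma>\<in>\<Sigma>. \<forall>\<tau>. \<tau> \<subseteq> \<sigma> \<and> \<tau> \<noteq> {} \<longrightarrow> \<tau> \<in> \<Sigma>)"

definition simplices :: "'a set set \<Rightarrow> nat \<Rightarrow> 'a set set" where
  "simplices \<Sigma> d = {\<sigma> \<in> \<Sigma>. card \<sigma> = d + 1}"

text \<open>An orientation assigns to each simplex a sign in {1,-1}: the oriented simplex
  [\<sigma>] is \<open>ori \<sigma>\<close> times the simplex oriented by increasing vertex order.\<close>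
definition orientation :: "('a set \<Rightarrow> real) \<Rightarrow> bool" where
  "orientation ori \<longleftrightarrow> (\<forall>\<sigma>. ori \<sigma> = 1 \<or> ori \<sigma> = -1)"

text \<open>Coefficient of [\<tau>] in the simplicial boundary of [\<sigma>], for a facet \<tau> of \<sigma>;
  for [v_0,...,v_k] in increasing order, \<partial> = \<Sum> (-1)^i [.. without v_i ..].\<close>
definition bsgn :: "('a::linorder set \<Rightarrow> real) \<Rightarrow> 'a set \<Rightarrow> 'a set \<Rightarrow> real" where
  "bsgn ori \<tau> \<sigma> = ori \<sigma> * ori \<tau> *
     (-1) ^ card {u \<in> \<sigma>. u < (THE v. v \<in> \<sigma> \<and> \<tau> = \<sigma> - {v})}"

definition incidence :: "'a set set \<Rightarrow> nat \<Rightarrow> ('a::linorder set \<Rightarrow> real) \<Rightarrow> 'a set \<Rightarrow> 'a set \<Rightarrow> real" where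
  "incidence \<Sigma> d ori \<tau> \<sigma> =
     (if \<tau> \<in> simplices \<Sigma> d \<and> \<sigma> \<in> simplices \<Sigma> (d+1) \<and> \<tau> \<subseteq> \<sigma> then bsgn ori \<tau> \<sigma> else 0)"

definition deg :: "'a set set \<Rightarrow> nat \<Rightarrow> 'a set \<Rightarrow> nat" where
  "deg \<Sigma> d \<tau> = card {\<sigma> \<in> simplices \<Sigma> (d+1). \<tau> \<subseteq> \<sigma>}"

text \<open>A fixed enumeration of \<Sigma>_d used to index matrices (the spectrum does not depend on it).\<close>
definition simplex_list :: "'a set set \<Rightarrow> nat \<Rightarrow> 'a set list" where
  "simplex_list \<Sigma> d = (SOME xs. distinct xs \<and> set xs = simplices \<Sigma> d)"

definition up_laplacian :: "'a set set \<Rightarrow> nat \<Rightarrow> ('a::linorder set \<Rightarrow> real) \<Rightarrow> real mat" where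
  "up_laplacian \<Sigma> d ori =
     (let xs = simplex_list \<Sigma> d; n = length xs in
      mat n n (\<lambda>(i, j). (1 / real (deg \<Sigma> d (xs ! i))) *
        (\<Sum>\<sigma>\<in>simplices \<Sigma> (d+1). incidence \<Sigma> d ori (xs ! i) \<sigma> * incidence \<Sigma> d ori (xs ! j) \<sigma>)))"

definition gamma_adj :: "'a set set \<Rightarrow> nat \<Rightarrow> 'a set \<Rightarrow> 'a set \<Rightarrow> bool" where
  "gamma_adj \<Sigma> d \<tau> \<tau>' \<longleftrightarrow> \<tau> \<in> simplices \<Sigma> d \<and> \<tau>' \<in> simplices \<Sigma> d \<and> \<tau> \<noteq> \<tau>' \<and>
     (\<exists>\<sigma>\<in>simplices \<Sigma> (d+1). \<tau> \<subseteq> \<sigma> \<and> \<tau>' \<subseteq> \<sigma>)"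

text \<open>Edge sign; the unique common coface is \<tau> \<union> \<tau>'.\<close>
definition gamma_sign :: "('a::linorder set \<Rightarrow> real) \<Rightarrow> 'a set \<Rightarrow> 'a set \<Rightarrow> real" where
  "gamma_sign ori \<tau> \<tau>' = - bsgn ori \<tau> (\<tau> \<union> \<tau>') * bsgn ori \<tau>' (\<tau> \<union> \<tau>')"

definition gamma_components :: "'a set set \<Rightarrow> nat \<Rightarrow> 'a set set set" where
  "gamma_components \<Sigma> d =
     simplices \<Sigma> d // {(x, y). x \<in> simplices \<Sigma> d \<and> y \<in> simplices \<Sigma> d \<and>
                              (x, y) \<in> {(u, v). gamma_adj \<Sigma> d u v}\<^sup>*}"

definition antibalanced :: "'a set set \<Rightarrow> nat \<Rightarrow> ('a::linorder set \<Rightarrow> real) \<Rightarrow> 'a set set \<Rightarrow> bool" where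
  "antibalanced \<Sigma> d ori C \<longleftrightarrow>
     (\<exists>\<theta>. (\<forall>x\<in>C. \<theta> x = 1 \<or> \<theta> x = -1) \<and>
          (\<forall>x\<in>C. \<forall>y\<in>C. gamma_adj \<Sigma> d x y \<longrightarrow> \<theta> x * gamma_sign ori x y * \<theta> y = -1))"

end

theory Submission
  imports Defs "Jordan_Normal_Form.Jordan_Normal_Form_Existence" "Jordan_Normal_Form.Jordan_Normal_Form_Uniqueness"
begin

hide_const (open) Coset.order

text \<open>The normalized up-Laplacian \<open>D\<^sup>-\<^sup>1 B B\<^sup>T\<close> is self-adjoint for the inner product
  weighted by the degrees, so it is diagonalizable and the multiplicity of \<open>d + 2\<close> is the
  dimension of the eigenspace. A function \<open>f\<close> on \<open>d\<close>-simplices lies in that eigenspace iff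
  Cauchy--Schwarz is an equality on every \<open>(d+1)\<close>-simplex \<open>\<sigma>\<close>, i.e. iff \<open>[\<tau>:\<sigma>] f(\<tau>)\<close>
  is the same for all \<open>d + 2\<close> facets \<open>\<tau>\<close> of \<open>\<sigma>\<close>; equivalently
  \<open>f(\<tau>) = - s(\<tau>,\<tau>') f(\<tau>')\<close> along every edge of \<open>\<Gamma>\<^sub>d\<close>. Such an \<open>f\<close> has constant absolute
  value on each connected component, and where it does not vanish its signs switch all edge
  signs of the component to \<open>-1\<close>. Conversely every antibalancing switching, extended by zero,
  is an eigenfunction. So the eigenspace has a basis indexed by the antibalanced components.\<close>

section \<open>Matrices symmetric for a weighted inner product\<close>

lemma mult_mat_vec_index_sum:
  assumes "A \<in> carrier_mat n m" "v \<in> carrier_vec m" "i < n"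
  shows "(A *\<^sub>v v) $ i = (\<Sum>j<m. A $$ (i,j) * v $ j)"
  using assms by (auto simp: scalar_prod_def row_def lessThan_atLeast0 intro!: sum.cong)

lemma char_matrix_mult_vec_index:
  assumes "A \<in> carrier_mat n n" "v \<in> carrier_vec n" "i < n"
  shows "(char_matrix A c *\<^sub>v v) $ i = (A *\<^sub>v v) $ i - c * v $ i"
proof -
  have C: "char_matrix A c \<in> carrier_mat n n" using assms(1) by simp
  have "(char_matrix A c *\<^sub>v v) $ i = (\<Sum>j<n. A $$ (i,j) * v $ j - (if i = j then c * v $ j else 0))"
    unfolding mult_mat_vec_index_sum[OF C assms(2,3)]
    using assms by (intro sum.cong refl) (auto simp: char_matrix_def left_diff_distrib)
  also have "\<dots> = (\<Sum>j<n. A $$ (i,j) * v $ j) - c * v $ i"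
    using assms(3) by (simp add: sum_subtractf)
  also have "\<dots> = (A *\<^sub>v v) $ i - c * v $ i"
    unfolding mult_mat_vec_index_sum[OF assms] ..
  finally show ?thesis .
qed

lemma sum_list_mono_eq_imp_eq:
  fixes f g :: "'b \<Rightarrow> nat"
  assumes "(\<Sum>x\<leftarrow>xs. f x) = (\<Sum>x\<leftarrow>xs. g x)" and "\<And>x. g x \<le> f x" and "x \<in> set xs"
  shows "f x = g x"
  using assms
proof (induction xs)
  case (Cons a xs)
  have "(\<Sum>x\<leftarrow>xs. g x) \<le> (\<Sum>x\<leftarrow>xs. f x)"
    by (rule sum_list_mono) (rule Cons.prems(2))
  moreover have "g a \<le> f a" by (rule Cons.prems(2))
  ultimately have "f a = g a" "(\<Sum>x\<leftarrow>xs. f x) = (\<Sum>x\<leftarrow>xs. g x)"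
    using Cons.prems(1) by simp_all
  with Cons.IH Cons.prems(2,3) show ?case by auto
qed simp

locale weighted_symmetric =
  fixes n :: nat and w :: "nat \<Rightarrow> real" and A :: "real mat"
  assumes carrier: "A \<in> carrier_mat n n"
    and weight_pos: "\<And>i. i < n \<Longrightarrow> w i > 0"
    and symmetric: "\<And>i j. i < n \<Longrightarrow> j < n \<Longrightarrow> w i * A $$ (i,j) = w j * A $$ (j,i)"
begin

lemma char_matrix_weighted_symmetric: "weighted_symmetric n w (char_matrix A c)"
proof
  have entry: "char_matrix A c $$ (i,j) = A $$ (i,j) - (if i = j then c else 0)"
    if "i < n" "j < n" for i j
    using carrier that unfolding char_matrix_def by auto
  show "w i * char_matrix A c $$ (i,j) = w j * char_matrix A c $$ (j,i)"
    if "i < n" "j < n" for i j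
    using symmetric[OF that] that by (auto simp: entry right_diff_distrib)
qed (use carrier weight_pos in auto)

text \<open>The Hermitian form \<open>S\<close> below is real by the symmetry, and equals \<open>c\<close> times the
  positive number \<open>r\<close>.\<close>
lemma eigenvalue_real:
  assumes "eigenvector (map_mat complex_of_real A) v c"
  shows "Im c = 0"
proof -
  let ?A = "map_mat complex_of_real A"
  have v: "v \<in> carrier_vec n" and v0: "v \<noteq> 0\<^sub>v n" and eq: "?A *\<^sub>v v = c \<cdot>\<^sub>v v"
    using assms carrier unfolding eigenvector_def by auto
  have row: "(\<Sum>j<n. complex_of_real (A $$ (i,j)) * v $ j) = c * v $ i" if "i < n" for i
  proof -
    have "(?A *\<^sub>v v) $ i = (c \<cdot>\<^sub>v v) $ i" using eq by simp
    thus ?thesis using mult_mat_vec_index_sum[of ?A n n v i] carrier v that by auto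
  qed
  define S where "S = (\<Sum>i<n. \<Sum>j<n. complex_of_real (w i * A $$ (i,j)) * cnj (v $ i) * v $ j)"
  have "cnj S = (\<Sum>i<n. \<Sum>j<n. complex_of_real (w i * A $$ (i,j)) * v $ i * cnj (v $ j))"
    unfolding S_def by (simp add: mult.commute)
  also have "\<dots> = (\<Sum>j<n. \<Sum>i<n. complex_of_real (w i * A $$ (i,j)) * v $ i * cnj (v $ j))"
    by (rule sum.swap)
  also have "\<dots> = S"
    unfolding S_def by (intro sum.cong refl, subst symmetric, auto simp: mult_ac)
  finally have S_real: "Im S = 0" by (metis Reals_cnj_iff complex_is_Real_iff)
  define r where "r = (\<Sum>i<n. w i * (cmod (v $ i))\<^sup>2)"
  have "S = (\<Sum>i<n. complex_of_real (w i) * cnj (v $ i) * (\<Sum>j<n. complex_of_real (A $$ (i,j)) * v $ j))"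
    unfolding S_def by (simp add: sum_distrib_left mult_ac)
  also have "\<dots> = (\<Sum>i<n. complex_of_real (w i) * cnj (v $ i) * (c * v $ i))"
    by (intro sum.cong refl) (simp add: row)
  also have "\<dots> = c * complex_of_real r"
    unfolding r_def by (simp add: sum_distrib_left mult_ac complex_mult_cnj cmod_power2)
  finally have S_eq: "S = c * complex_of_real r" .
  obtain k where k: "k < n" "v $ k \<noteq> 0"
    using v v0 by (metis carrier_vecD eq_vecI index_zero_vec(1,2))
  have "0 < w k * (cmod (v $ k))\<^sup>2" using k weight_pos by auto
  also have "\<dots> \<le> r"
    unfolding r_def using k weight_pos by (intro member_le_sum) (auto simp: less_imp_le)
  finally show ?thesis using S_real S_eq by simp
qed

lemma char_poly_splits: "\<exists>as. char_poly A = (\<Prod>a\<leftarrow>as. [:-a, 1:])"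
proof -
  interpret complex_hom: map_poly_inj_comm_ring_hom complex_of_real ..
  let ?A = "map_mat complex_of_real A"
  have A: "?A \<in> carrier_mat n n" using carrier by auto
  obtain bs where bs: "char_poly ?A = (\<Prod>b\<leftarrow>bs. [:-b, 1:])"
    using char_poly_factorized[OF A] by auto
  have real: "Im b = 0" if "b \<in> set bs" for b
  proof -
    have "poly (char_poly ?A) b = 0" unfolding bs using that by (induct bs) auto
    then obtain v where "eigenvector ?A v b"
      using eigenvalue_root_char_poly[OF A] unfolding eigenvalue_def by auto
    thus ?thesis by (rule eigenvalue_real)
  qed
  have "(\<Prod>b\<leftarrow>bs. [:-b, 1:]) = map_poly complex_of_real (\<Prod>b\<leftarrow>bs. [:-Re b, 1:])"
    using real
  proof (induct bs)
    case (Cons b bs)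
    have "[:-b, 1:] = map_poly complex_of_real [:-Re b, 1:]"
      using Cons(2) by (simp add: complex_eq_iff)
    moreover have "(\<Prod>b\<leftarrow>bs. [:-b, 1:]) = map_poly complex_of_real (\<Prod>b\<leftarrow>bs. [:-Re b, 1:])"
      using Cons by auto
    ultimately show ?case by (simp only: list.map prod_list.Cons complex_hom.hom_mult)
  qed simp
  hence "char_poly A = (\<Prod>b\<leftarrow>bs. [:-Re b, 1:])"
    using bs of_real_hom.char_poly_hom[OF carrier] complex_hom.eq_iff by metis
  hence "char_poly A = (\<Prod>a\<leftarrow>map Re bs. [:-a, 1:])"
    by (simp add: o_def)
  thus ?thesis by blast
qed

text \<open>By the symmetry, \<open>\<Sum>\<^sub>i w\<^sub>i (Av)\<^sub>i\<^sup>2 = \<Sum>\<^sub>j w\<^sub>j v\<^sub>j (A(Av))\<^sub>j\<close>.\<close>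
lemma kernel_square_subset:
  assumes v: "v \<in> carrier_vec n" and zero: "A *\<^sub>v (A *\<^sub>v v) = 0\<^sub>v n"
  shows "A *\<^sub>v v = 0\<^sub>v n"
proof -
  define u where "u = A *\<^sub>v v"
  have u: "u \<in> carrier_vec n" using carrier v u_def by auto
  have u_index: "u $ i = (\<Sum>j<n. A $$ (i,j) * v $ j)" if "i < n" for i
    unfolding u_def using mult_mat_vec_index_sum[OF carrier v that] .
  have Au_index: "(\<Sum>i<n. A $$ (j,i) * u $ i) = 0" if "j < n" for j
    using zero mult_mat_vec_index_sum[OF carrier u that] that unfolding u_def by simp
  have "(\<Sum>i<n. w i * u $ i * u $ i) = (\<Sum>i<n. \<Sum>j<n. (w i * A $$ (i,j)) * u $ i * v $ j)"
    by (simp add: u_index sum_distrib_left mult_ac)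
  also have "\<dots> = (\<Sum>j<n. \<Sum>i<n. (w j * A $$ (j,i)) * u $ i * v $ j)"
    by (subst sum.swap) (intro sum.cong refl, simp add: symmetric)
  also have "\<dots> = (\<Sum>j<n. w j * v $ j * (\<Sum>i<n. A $$ (j,i) * u $ i))"
    by (simp add: sum_distrib_left mult_ac)
  also have "\<dots> = 0" by (simp add: Au_index)
  finally have "(\<Sum>i<n. w i * u $ i * u $ i) = 0" .
  hence "w i * (u $ i * u $ i) = 0" if "i < n" for i
    using that by (subst (asm) sum_nonneg_eq_0_iff) (auto simp: weight_pos less_imp_le mult.assoc)
  hence "u $ i = 0" if "i < n" for i
    using weight_pos[OF that] that mult_eq_0_iff[of "w i"] by fastforce
  hence "u = 0\<^sub>v n" using u by (intro eq_vecI) simp_all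
  thus ?thesis unfolding u_def .
qed

lemma kernel_square: "mat_kernel (A ^\<^sub>m 2) = mat_kernel A"
proof (intro equalityI subsetI)
  have square: "A ^\<^sub>m 2 = A * A" using carrier by (simp add: numeral_2_eq_2)
  have A2: "A ^\<^sub>m 2 \<in> carrier_mat n n" using carrier by simp
  have assoc: "(A ^\<^sub>m 2) *\<^sub>v v = A *\<^sub>v (A *\<^sub>v v)" if "v \<in> carrier_vec n" for v
    unfolding square using carrier that by (simp add: assoc_mult_mat_vec)
  fix v
  show "v \<in> mat_kernel A" if "v \<in> mat_kernel (A ^\<^sub>m 2)"
    using that kernel_square_subset[of v] assoc[of v] mat_kernelD[OF A2 that]
    by (intro mat_kernelI[OF carrier]) auto
  show "v \<in> mat_kernel (A ^\<^sub>m 2)" if "v \<in> mat_kernel A"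
    using that assoc[of v] mat_kernelD[OF carrier that] carrier
    by (intro mat_kernelI[OF A2]) auto
qed

text \<open>Since \<open>A - c\<close> and \<open>(A - c)\<^sup>2\<close> have the same kernel, all Jordan blocks for \<open>c\<close>
  have size one.\<close>
lemma order_char_poly_eq_kernel_dim: "order c (char_poly A) = kernel_dim (char_matrix A c)"
proof -
  obtain as where "char_poly A = (\<Prod>a\<leftarrow>as. [:-a, 1:])" using char_poly_splits by auto
  from jordan_nf_exists[OF carrier this] obtain n_as where jnf: "jordan_nf A n_as" by auto
  interpret C: weighted_symmetric n w "char_matrix A c" by (rule char_matrix_weighted_symmetric)
  let ?sizes = "map fst [(m, e)\<leftarrow>n_as. e = c]"
  have "dim_gen_eigenspace A c 2 = dim_gen_eigenspace A c 1"
    unfolding dim_gen_eigenspace_def kernel_dim_def using C.kernel_square C.carrier by simp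
  hence sizes: "(\<Sum>m\<leftarrow>?sizes. min 2 m) = (\<Sum>m\<leftarrow>?sizes. min 1 m)"
    unfolding dim_gen_eigenspace[OF jnf] .
  have "m = min 1 m" if "m \<in> set ?sizes" for m
  proof -
    have "min 2 m = min 1 m" by (rule sum_list_mono_eq_imp_eq[OF sizes _ that]) simp
    thus ?thesis by linarith
  qed
  hence "(\<Sum>m\<leftarrow>?sizes. m) = (\<Sum>m\<leftarrow>?sizes. min 1 m)"
    by (metis map_ident map_cong)
  moreover have "filter (\<lambda>me. snd me = c) n_as = [(m, e)\<leftarrow>n_as. e = c]"
    by (induct n_as) auto
  ultimately have "order c (char_poly A) = dim_gen_eigenspace A c 1"
    unfolding jordan_nf_order[OF jnf] dim_gen_eigenspace[OF jnf] by simp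
  thus ?thesis unfolding dim_gen_eigenspace_def using carrier by simp
qed

end

section \<open>Vectors with disjoint supports\<close>

context vec_space
begin

lemma lincomb_index_disjoint_supports:
  assumes "finite B" "B \<subseteq> carrier_vec n"
    and disjoint: "\<And>v w i. v \<in> B \<Longrightarrow> w \<in> B \<Longrightarrow> v \<noteq> w \<Longrightarrow> i < n \<Longrightarrow> v $ i = 0 \<or> w $ i = 0"
    and w: "w \<in> B" "i < n" "w $ i \<noteq> 0"
  shows "lincomb a B $ i = a w * w $ i"
proof -
  have "lincomb a B $ i = a w * w $ i + (\<Sum>v\<in>B - {w}. a v * v $ i)"
    using assms lincomb_index[of i B a] by (simp add: sum.remove)
  also have "(\<Sum>v\<in>B - {w}. a v * v $ i) = 0"
  proof (rule sum.neutral, rule ballI)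
    fix v assume "v \<in> B - {w}"
    thus "a v * v $ i = 0" using disjoint[of v w i] w by auto
  qed
  finally show ?thesis by simp
qed

lemma lincomb_index_outside_supports:
  assumes "B \<subseteq> carrier_vec n" "i < n" "\<And>w. w \<in> B \<Longrightarrow> w $ i = 0"
  shows "lincomb a B $ i = 0"
  using assms lincomb_index[of i B a] by simp

lemma lin_indpt_disjoint_supports:
  assumes carrier: "B \<subseteq> carrier_vec n" and nonzero: "0\<^sub>v n \<notin> B"
    and disjoint: "\<And>v w i. v \<in> B \<Longrightarrow> w \<in> B \<Longrightarrow> v \<noteq> w \<Longrightarrow> i < n \<Longrightarrow> v $ i = 0 \<or> w $ i = 0"
  shows "lin_indpt B"
proof
  assume "lin_dep B"
  then obtain U a v where U: "finite U" "U \<subseteq> B" and zero: "lincomb a U = 0\<^sub>v n"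
    and v: "v \<in> U" "a v \<noteq> 0"
    unfolding lin_dep_def by (auto simp: module_vec_simps)
  obtain i where i: "i < n" "v $ i \<noteq> 0"
    using v U carrier nonzero by (metis carrier_vecD eq_vecI index_zero_vec subsetD)
  have "lincomb a U $ i = a v * v $ i"
  proof (rule lincomb_index_disjoint_supports[OF U(1)])
    show "U \<subseteq> carrier_vec n" using U carrier by auto
    show "v $ i = 0 \<or> w $ i = 0" if "v \<in> U" "w \<in> U" "v \<noteq> w" "i < n" for v w i
      using that U(2) disjoint by blast
  qed (use v i in auto)
  with zero i v show False by simp
qed

lemma span_disjoint_supports:
  assumes B: "finite B" "B \<subseteq> carrier_vec n"
    and disjoint: "\<And>v w i. v \<in> B \<Longrightarrow> w \<in> B \<Longrightarrow> v \<noteq> w \<Longrightarrow> i < n \<Longrightarrow> v $ i = 0 \<or> w $ i = 0"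
    and u: "u \<in> carrier_vec n"
    and proportional: "\<And>w. w \<in> B \<Longrightarrow> \<exists>c. \<forall>i<n. w $ i \<noteq> 0 \<longrightarrow> u $ i = c * w $ i"
    and covered: "\<And>i. i < n \<Longrightarrow> u $ i \<noteq> 0 \<Longrightarrow> \<exists>w\<in>B. w $ i \<noteq> 0"
  shows "u \<in> span B"
proof -
  define a where "a w = (SOME c. \<forall>i<n. w $ i \<noteq> 0 \<longrightarrow> u $ i = c * w $ i)" for w
  have a: "u $ i = a w * w $ i" if "w \<in> B" "i < n" "w $ i \<noteq> 0" for w i
    using someI_ex[OF proportional[OF that(1)]] that unfolding a_def by blast
  have "lincomb a B = u"
  proof (rule eq_vecI)
    show "dim_vec (lincomb a B) = dim_vec u"
      using lincomb_closed[OF B(2)] u by (simp add: module_vec_simps)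
    fix i assume "i < dim_vec u"
    hence i: "i < n" using u by simp
    show "lincomb a B $ i = u $ i"
    proof (cases "\<exists>w\<in>B. w $ i \<noteq> 0")
      case True
      then obtain w where w: "w \<in> B" "w $ i \<noteq> 0" by blast
      show ?thesis
        using lincomb_index_disjoint_supports[OF B disjoint w(1) i w(2)] a[OF w(1) i w(2)] by simp
    next
      case False
      hence "u $ i = 0" using covered[OF i] by blast
      moreover have "lincomb a B $ i = 0"
        using False by (intro lincomb_index_outside_supports[OF B(2) i]) blast
      ultimately show ?thesis by simp
    qed
  qed
  thus ?thesis using B unfolding span_def by blast
qed

end

lemma kernel_dim_eq_card_disjoint_supports:
  fixes A :: "'a::field mat"
  assumes A: "A \<in> carrier_mat nr n"
    and B: "finite B" "B \<subseteq> mat_kernel A" "0\<^sub>v n \<notin> B"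
    and disjoint: "\<And>v w i. v \<in> B \<Longrightarrow> w \<in> B \<Longrightarrow> v \<noteq> w \<Longrightarrow> i < n \<Longrightarrow> v $ i = 0 \<or> w $ i = 0"
    and proportional: "\<And>u w. u \<in> mat_kernel A \<Longrightarrow> w \<in> B \<Longrightarrow>
      \<exists>c. \<forall>i<n. w $ i \<noteq> 0 \<longrightarrow> u $ i = c * w $ i"
    and covered: "\<And>u i. u \<in> mat_kernel A \<Longrightarrow> i < n \<Longrightarrow> u $ i \<noteq> 0 \<Longrightarrow> \<exists>w\<in>B. w $ i \<noteq> 0"
  shows "kernel_dim A = card B"
proof -
  interpret K: kernel nr n A by unfold_locales (rule A)
  have carrier: "B \<subseteq> carrier_vec n" using B(2) mat_kernel_carrier[OF A] by auto
  have "K.span B = mat_kernel A"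
  proof
    show "K.span B \<subseteq> mat_kernel A" using K.Ker.span_is_subset2[OF B(2)] by simp
    show "mat_kernel A \<subseteq> K.span B"
    proof
      fix u assume u: "u \<in> mat_kernel A"
      have "u \<in> K.NC.span B"
        using disjoint mat_kernelD(1)[OF A u] proportional[OF u] covered[OF u]
        by (rule K.NC.span_disjoint_supports[OF B(1) carrier]) blast+
      thus "u \<in> K.span B" unfolding K.span_same[OF B(2)] .
    qed
  qed
  moreover have "\<not> K.lin_dep B"
    unfolding K.lindep_same[OF B(2)] using K.NC.lin_indpt_disjoint_supports[OF carrier B(3) disjoint] .
  ultimately have "K.basis B" unfolding K.Ker.basis_def using B(2) by simp
  thus ?thesis using K.Ker.dim_basis[OF B(1)] by simp
qed

section \<open>Oriented simplicial complexes\<close>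

lemma sum_sum_square_diff:
  fixes h :: "'b \<Rightarrow> real"
  assumes "finite F"
  shows "(\<Sum>x\<in>F. \<Sum>y\<in>F. (h x - h y)\<^sup>2) = 2 * real (card F) * (\<Sum>x\<in>F. (h x)\<^sup>2) - 2 * (\<Sum>x\<in>F. h x)\<^sup>2"
proof -
  have "(\<Sum>x\<in>F. \<Sum>y\<in>F. (h x - h y)\<^sup>2) = (\<Sum>x\<in>F. \<Sum>y\<in>F. (h x)\<^sup>2 + (h y)\<^sup>2 - 2 * h x * h y)"
    by (simp add: power2_diff)
  also have "\<dots> = 2 * real (card F) * (\<Sum>x\<in>F. (h x)\<^sup>2) - 2 * (\<Sum>x\<in>F. h x) * (\<Sum>x\<in>F. h x)"
    by (simp add: sum.distrib sum_subtractf sum_distrib_left sum_distrib_right mult_ac)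
  finally show ?thesis by (simp add: power2_eq_square)
qed

locale oriented_complex =
  fixes \<Sigma> :: "'a::linorder set set" and d :: nat and ori :: "'a set \<Rightarrow> real"
  assumes complex: "simplicial_complex \<Sigma>" and oriented: "orientation ori"
begin

abbreviation S :: "'a set set" where "S \<equiv> simplices \<Sigma> d"
abbreviation T :: "'a set set" where "T \<equiv> simplices \<Sigma> (Suc d)"
abbreviation facets :: "'a set \<Rightarrow> 'a set set" where "facets \<sigma> \<equiv> {\<tau> \<in> S. \<tau> \<subseteq> \<sigma>}"
abbreviation b :: "'a set \<Rightarrow> 'a set \<Rightarrow> real" where "b \<equiv> bsgn ori"
abbreviation inc :: "'a set \<Rightarrow> 'a set \<Rightarrow> real" where "inc \<equiv> incidence \<Sigma> d ori"

lemma finite_simplices: "finite (simplices \<Sigma> k)"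
  using complex unfolding simplicial_complex_def simplices_def by auto

lemma finite_simplex: "\<sigma> \<in> simplices \<Sigma> k \<Longrightarrow> finite \<sigma>"
  using complex unfolding simplicial_complex_def simplices_def by auto

lemma card_simplex: "\<sigma> \<in> simplices \<Sigma> k \<Longrightarrow> card \<sigma> = k + 1"
  unfolding simplices_def by auto

lemma bsgn_cases: "b \<tau> \<sigma> = 1 \<or> b \<tau> \<sigma> = -1"
proof -
  have "ori \<sigma> = 1 \<or> ori \<sigma> = -1" "ori \<tau> = 1 \<or> ori \<tau> = -1"
    using oriented unfolding orientation_def by auto
  moreover have "(-1::real) ^ k = 1 \<or> (-1::real) ^ k = -1" for k
    by (metis neg_one_even_power neg_one_odd_power)
  ultimately show ?thesis unfolding bsgn_def by fastforce
qed

lemma bsgn_square: "b \<tau> \<sigma> * b \<tau> \<sigma> = 1"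
  using bsgn_cases[of \<tau> \<sigma>] by auto

lemma card_facets:
  assumes "\<sigma> \<in> T"
  shows "card (facets \<sigma>) = d + 2"
proof -
  have "\<sigma> \<in> \<Sigma>" using assms unfolding simplices_def by auto
  moreover have "\<tau> \<noteq> {}" if "card \<tau> = d + 1" for \<tau> :: "'a set" using that by auto
  ultimately have "\<tau> \<in> \<Sigma>" if "\<tau> \<subseteq> \<sigma>" "card \<tau> = d + 1" for \<tau>
    using complex that unfolding simplicial_complex_def by blast
  hence "facets \<sigma> = {\<tau>. \<tau> \<subseteq> \<sigma> \<and> card \<tau> = d + 1}" unfolding simplices_def by auto
  thus ?thesis
    using n_subsets[OF finite_simplex[OF assms]] card_simplex[OF assms] by simp
qed

lemma union_facets:
  assumes \<sigma>: "\<sigma> \<in> T" and \<tau>: "\<tau> \<in> facets \<sigma>" "\<tau>' \<in> facets \<sigma>" and "\<tau> \<noteq> \<tau>'"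
  shows "\<tau> \<union> \<tau>' = \<sigma>"
proof -
  have fin: "finite \<sigma>" using finite_simplex[OF \<sigma>] .
  have card: "card \<tau> = d + 1" "card \<tau>' = d + 1" "card \<sigma> = d + 2"
    using \<tau> \<sigma> card_simplex by auto
  have "\<not> \<tau>' \<subseteq> \<tau>"
  proof
    assume "\<tau>' \<subseteq> \<tau>"
    moreover have "finite \<tau>" using \<tau> fin finite_subset by auto
    ultimately have "\<tau>' = \<tau>" using card card_subset_eq by metis
    with \<open>\<tau> \<noteq> \<tau>'\<close> show False by simp
  qed
  hence "card \<tau> < card (\<tau> \<union> \<tau>')"
    using fin \<tau> by (intro psubset_card_mono) (auto intro: finite_subset)
  moreover have "card (\<tau> \<union> \<tau>') \<le> card \<sigma>" using fin \<tau> by (intro card_mono) auto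
  ultimately have "card (\<tau> \<union> \<tau>') = card \<sigma>" using card by linarith
  thus ?thesis using fin \<tau> card_subset_eq[of \<sigma> "\<tau> \<union> \<tau>'"] by auto
qed

lemma incidence_eq: "\<tau> \<in> S \<Longrightarrow> \<sigma> \<in> T \<Longrightarrow> inc \<tau> \<sigma> = (if \<tau> \<subseteq> \<sigma> then b \<tau> \<sigma> else 0)"
  unfolding incidence_def by auto

lemma sum_incidence_square:
  assumes "\<tau> \<in> S"
  shows "(\<Sum>\<sigma>\<in>T. (inc \<tau> \<sigma>)\<^sup>2) = real (deg \<Sigma> d \<tau>)"
proof -
  have "(\<Sum>\<sigma>\<in>T. (inc \<tau> \<sigma>)\<^sup>2) = (\<Sum>\<sigma>\<in>T. if \<tau> \<subseteq> \<sigma> then 1 else 0)"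
    using assms by (intro sum.cong refl) (auto simp: incidence_eq power2_eq_square bsgn_square)
  also have "\<dots> = real (card {\<sigma>\<in>T. \<tau> \<subseteq> \<sigma>})"
    using finite_simplices by (simp add: sum.inter_filter[symmetric])
  finally show ?thesis unfolding deg_def by simp
qed

definition coboundary :: "('a set \<Rightarrow> real) \<Rightarrow> 'a set \<Rightarrow> real" where
  "coboundary f \<sigma> = (\<Sum>\<tau>\<in>S. inc \<tau> \<sigma> * f \<tau>)"

definition up_operator :: "('a set \<Rightarrow> real) \<Rightarrow> 'a set \<Rightarrow> real" where
  "up_operator f \<tau> = (\<Sum>\<sigma>\<in>T. inc \<tau> \<sigma> * coboundary f \<sigma>)"

definition facet_constant :: "('a set \<Rightarrow> real) \<Rightarrow> bool" where
  "facet_constant f \<longleftrightarrow> (\<forall>\<sigma>\<in>T. \<forall>\<tau>\<in>facets \<sigma>. \<forall>\<tau>'\<in>facets \<sigma>. b \<tau> \<sigma> * f \<tau> = b \<tau>' \<sigma> * f \<tau>')"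

lemma coboundary_eq_sum_facets:
  "\<sigma> \<in> T \<Longrightarrow> coboundary f \<sigma> = (\<Sum>\<tau>\<in>facets \<sigma>. b \<tau> \<sigma> * f \<tau>)"
  unfolding coboundary_def using finite_simplices
  by (simp add: sum.inter_filter incidence_eq) (intro sum.cong refl, auto)

lemma sum_coboundary_square:
  "(\<Sum>\<sigma>\<in>T. (coboundary f \<sigma>)\<^sup>2) = (\<Sum>\<tau>\<in>S. f \<tau> * up_operator f \<tau>)"
proof -
  have "(\<Sum>\<sigma>\<in>T. (coboundary f \<sigma>)\<^sup>2) = (\<Sum>\<sigma>\<in>T. \<Sum>\<tau>\<in>S. coboundary f \<sigma> * (inc \<tau> \<sigma> * f \<tau>))"
    by (simp add: power2_eq_square sum_distrib_left coboundary_def[of f])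
  also have "\<dots> = (\<Sum>\<tau>\<in>S. \<Sum>\<sigma>\<in>T. coboundary f \<sigma> * (inc \<tau> \<sigma> * f \<tau>))"
    by (rule sum.swap)
  also have "\<dots> = (\<Sum>\<tau>\<in>S. f \<tau> * up_operator f \<tau>)"
    unfolding up_operator_def by (simp add: sum_distrib_left mult_ac)
  finally show ?thesis .
qed

lemma sum_deg_square:
  "(\<Sum>\<tau>\<in>S. real (deg \<Sigma> d \<tau>) * (f \<tau>)\<^sup>2) = (\<Sum>\<sigma>\<in>T. \<Sum>\<tau>\<in>facets \<sigma>. (b \<tau> \<sigma> * f \<tau>)\<^sup>2)"
proof -
  have "(\<Sum>\<tau>\<in>S. real (deg \<Sigma> d \<tau>) * (f \<tau>)\<^sup>2) = (\<Sum>\<tau>\<in>S. \<Sum>\<sigma>\<in>T. (inc \<tau> \<sigma>)\<^sup>2 * (f \<tau>)\<^sup>2)"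
    by (intro sum.cong refl) (simp only: sum_incidence_square[symmetric] sum_distrib_right)
  also have "\<dots> = (\<Sum>\<sigma>\<in>T. \<Sum>\<tau>\<in>S. (inc \<tau> \<sigma>)\<^sup>2 * (f \<tau>)\<^sup>2)" by (rule sum.swap)
  also have "\<dots> = (\<Sum>\<sigma>\<in>T. \<Sum>\<tau>\<in>facets \<sigma>. (b \<tau> \<sigma> * f \<tau>)\<^sup>2)"
  proof (rule sum.cong[OF refl])
    fix \<sigma> assume "\<sigma> \<in> T"
    hence "(\<Sum>\<tau>\<in>S. (inc \<tau> \<sigma>)\<^sup>2 * (f \<tau>)\<^sup>2) = (\<Sum>\<tau>\<in>S. if \<tau> \<subseteq> \<sigma> then (b \<tau> \<sigma> * f \<tau>)\<^sup>2 else 0)"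
      by (intro sum.cong refl) (simp add: incidence_eq power_mult_distrib)
    thus "(\<Sum>\<tau>\<in>S. (inc \<tau> \<sigma>)\<^sup>2 * (f \<tau>)\<^sup>2) = (\<Sum>\<tau>\<in>facets \<sigma>. (b \<tau> \<sigma> * f \<tau>)\<^sup>2)"
      using finite_simplices by (simp add: sum.inter_filter)
  qed
  finally show ?thesis .
qed

lemma facet_constant_imp_up_operator:
  assumes "facet_constant f" and \<tau>: "\<tau> \<in> S"
  shows "up_operator f \<tau> = (real d + 2) * real (deg \<Sigma> d \<tau>) * f \<tau>"
proof -
  have "coboundary f \<sigma> = (real d + 2) * (b \<tau> \<sigma> * f \<tau>)" if \<sigma>: "\<sigma> \<in> T" and "\<tau> \<subseteq> \<sigma>" for \<sigma>
  proof -
    have "coboundary f \<sigma> = (\<Sum>\<tau>'\<in>facets \<sigma>. b \<tau> \<sigma> * f \<tau>)"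
      unfolding coboundary_eq_sum_facets[OF \<sigma>]
      using assms that unfolding facet_constant_def by (intro sum.cong refl) blast
    thus ?thesis using card_facets[OF \<sigma>] by simp
  qed
  hence "inc \<tau> \<sigma> * coboundary f \<sigma> = (real d + 2) * f \<tau> * (inc \<tau> \<sigma>)\<^sup>2" if "\<sigma> \<in> T" for \<sigma>
    using \<tau> that by (simp add: incidence_eq power2_eq_square bsgn_square mult_ac)
  hence "up_operator f \<tau> = (real d + 2) * f \<tau> * (\<Sum>\<sigma>\<in>T. (inc \<tau> \<sigma>)\<^sup>2)"
    unfolding up_operator_def sum_distrib_left by (intro sum.cong) auto
  thus ?thesis using sum_incidence_square[OF \<tau>] by simp
qed

text \<open>Summed over all \<open>\<sigma>\<close>, the deviations vanish by the eigenvalue equation; since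
  each one is a sum of squares, all the summands \<open>b \<tau> \<sigma> * f \<tau>\<close> over facets agree.\<close>
lemma up_operator_imp_facet_constant:
  assumes eigen: "\<And>\<tau>. \<tau> \<in> S \<Longrightarrow> up_operator f \<tau> = (real d + 2) * real (deg \<Sigma> d \<tau>) * f \<tau>"
  shows "facet_constant f"
proof -
  let ?h = "\<lambda>\<sigma> \<tau>. b \<tau> \<sigma> * f \<tau>"
  let ?deviation = "\<lambda>\<sigma>. \<Sum>x\<in>facets \<sigma>. \<Sum>y\<in>facets \<sigma>. (?h \<sigma> x - ?h \<sigma> y)\<^sup>2"
  have fin: "finite (facets \<sigma>)" for \<sigma> using finite_simplices by simp
  have deviation: "?deviation \<sigma> = 2 * (real d + 2) * (\<Sum>\<tau>\<in>facets \<sigma>. (?h \<sigma> \<tau>)\<^sup>2) - 2 * (coboundary f \<sigma>)\<^sup>2"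
    if "\<sigma> \<in> T" for \<sigma>
    using sum_sum_square_diff[OF fin, of "?h \<sigma>"] card_facets[OF that] coboundary_eq_sum_facets[OF that]
    by simp
  have energy: "(\<Sum>\<sigma>\<in>T. (coboundary f \<sigma>)\<^sup>2) = (real d + 2) * (\<Sum>\<tau>\<in>S. real (deg \<Sigma> d \<tau>) * (f \<tau>)\<^sup>2)"
    unfolding sum_coboundary_square sum_distrib_left
    by (intro sum.cong refl) (simp add: eigen power2_eq_square)
  have "(\<Sum>\<sigma>\<in>T. ?deviation \<sigma>) =
      (\<Sum>\<sigma>\<in>T. 2 * (real d + 2) * (\<Sum>\<tau>\<in>facets \<sigma>. (?h \<sigma> \<tau>)\<^sup>2) - 2 * (coboundary f \<sigma>)\<^sup>2)"
    by (intro sum.cong refl) (rule deviation)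
  also have "\<dots> = 2 * (real d + 2) * (\<Sum>\<sigma>\<in>T. \<Sum>\<tau>\<in>facets \<sigma>. (?h \<sigma> \<tau>)\<^sup>2) - 2 * (\<Sum>\<sigma>\<in>T. (coboundary f \<sigma>)\<^sup>2)"
    by (simp only: sum_subtractf sum_distrib_left)
  also have "\<dots> = 0" unfolding energy sum_deg_square by (simp only: mult.assoc diff_self)
  finally have "(\<Sum>\<sigma>\<in>T. ?deviation \<sigma>) = 0" .
  moreover have "(\<Sum>\<sigma>\<in>T. ?deviation \<sigma>) = 0 \<longleftrightarrow> (\<forall>\<sigma>\<in>T. ?deviation \<sigma> = 0)"
    by (rule sum_nonneg_eq_0_iff[OF finite_simplices]) (simp add: sum_nonneg)
  moreover have "?deviation \<sigma> = 0 \<longleftrightarrow>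
      (\<forall>x\<in>facets \<sigma>. (\<Sum>y\<in>facets \<sigma>. (?h \<sigma> x - ?h \<sigma> y)\<^sup>2) = 0)" for \<sigma>
    by (rule sum_nonneg_eq_0_iff[OF fin]) (simp add: sum_nonneg)
  moreover have "(\<Sum>y\<in>facets \<sigma>. (?h \<sigma> x - ?h \<sigma> y)\<^sup>2) = 0 \<longleftrightarrow> (\<forall>y\<in>facets \<sigma>. ?h \<sigma> x = ?h \<sigma> y)"
    for \<sigma> x
    by (subst sum_nonneg_eq_0_iff[OF fin]) simp_all
  ultimately show ?thesis unfolding facet_constant_def by blast
qed

lemma up_operator_eigen_iff_facet_constant:
  "(\<forall>\<tau>\<in>S. up_operator f \<tau> = (real d + 2) * real (deg \<Sigma> d \<tau>) * f \<tau>) \<longleftrightarrow> facet_constant f"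
  using facet_constant_imp_up_operator up_operator_imp_facet_constant by blast

subsection \<open>The signed graph \<open>\<Gamma>\<^sub>d\<close>\<close>

abbreviation adj :: "'a set \<Rightarrow> 'a set \<Rightarrow> bool" where "adj \<equiv> gamma_adj \<Sigma> d"
abbreviation edge_sign :: "'a set \<Rightarrow> 'a set \<Rightarrow> real" where "edge_sign \<equiv> gamma_sign ori"
abbreviation edges :: "('a set \<times> 'a set) set" where "edges \<equiv> {(u, v). adj u v}"

definition sign_reversing :: "('a set \<Rightarrow> real) \<Rightarrow> bool" where
  "sign_reversing f \<longleftrightarrow> (\<forall>\<tau> \<tau>'. adj \<tau> \<tau>' \<longrightarrow> f \<tau> = - edge_sign \<tau> \<tau>' * f \<tau>')"

lemma adj_iff: "adj x y \<longleftrightarrow> x \<in> S \<and> y \<in> S \<and> x \<noteq> y \<and> (\<exists>\<sigma>\<in>T. x \<subseteq> \<sigma> \<and> y \<subseteq> \<sigma>)"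
  unfolding gamma_adj_def by simp

lemma adj_sym: "adj x y \<Longrightarrow> adj y x"
  unfolding gamma_adj_def by auto

lemma adj_simplices: "adj x y \<Longrightarrow> x \<in> S \<and> y \<in> S"
  unfolding gamma_adj_def by auto

lemma sign_reversing_cong: "(\<And>\<tau>. \<tau> \<in> S \<Longrightarrow> f \<tau> = g \<tau>) \<Longrightarrow> sign_reversing f \<longleftrightarrow> sign_reversing g"
  unfolding sign_reversing_def using adj_simplices by auto

lemma edge_sign_square: "edge_sign x y * edge_sign x y = 1"
proof -
  have "edge_sign x y * edge_sign x y = (b x (x \<union> y) * b x (x \<union> y)) * (b y (x \<union> y) * b y (x \<union> y))"
    unfolding gamma_sign_def by (simp add: mult_ac)
  thus ?thesis by (simp add: bsgn_square)
qed

lemma abs_edge_sign: "\<bar>edge_sign x y\<bar> = 1"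
  unfolding gamma_sign_def using bsgn_cases[of x "x \<union> y"] bsgn_cases[of y "x \<union> y"] by auto

text \<open>Two distinct facets \<open>\<tau>, \<tau>'\<close> of \<open>\<sigma>\<close> span \<open>\<sigma> = \<tau> \<union> \<tau>'\<close>, the coface used by
  \<open>edge_sign\<close>.\<close>
lemma facet_constant_iff_sign_reversing: "facet_constant f \<longleftrightarrow> sign_reversing f"
proof -
  have step: "b x \<sigma> * f x = b y \<sigma> * f y \<longleftrightarrow> f x = - edge_sign x y * f y"
    if "\<sigma> \<in> T" "x \<in> facets \<sigma>" "y \<in> facets \<sigma>" "x \<noteq> y" for \<sigma> x y
  proof -
    have "- edge_sign x y * f y = b x \<sigma> * (b y \<sigma> * f y)"
      unfolding gamma_sign_def union_facets[OF that] by (simp add: mult_ac)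
    moreover have "b x \<sigma> * (b x \<sigma> * z) = z" for z
      using bsgn_square[of x \<sigma>] by (simp add: mult.assoc[symmetric])
    hence "b x \<sigma> * f x = b y \<sigma> * f y \<longleftrightarrow> f x = b x \<sigma> * (b y \<sigma> * f y)" by metis
    ultimately show ?thesis by simp
  qed
  show ?thesis
  proof
    assume const: "facet_constant f"
    show "sign_reversing f" unfolding sign_reversing_def
    proof (intro allI impI)
      fix x y assume "adj x y"
      then obtain \<sigma> where "\<sigma> \<in> T" "x \<in> facets \<sigma>" "y \<in> facets \<sigma>" "x \<noteq> y"
        unfolding adj_iff by auto
      thus "f x = - edge_sign x y * f y"
        using step const unfolding facet_constant_def by blast
    qed
  next
    assume "sign_reversing f"
    hence "b x \<sigma> * f x = b y \<sigma> * f y" if "\<sigma> \<in> T" "x \<in> facets \<sigma>" "y \<in> facets \<sigma>" for \<sigma> x y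
      using step[OF that] that unfolding sign_reversing_def adj_iff
      by (cases "x = y") auto
    thus "facet_constant f" unfolding facet_constant_def by blast
  qed
qed

definition component :: "'a set \<Rightarrow> 'a set set" where
  "component x = {y \<in> S. (x, y) \<in> edges\<^sup>*}"

lemma gamma_components_eq: "gamma_components \<Sigma> d = component ` S"
proof -
  let ?R = "{(x, y). x \<in> S \<and> y \<in> S \<and> (x, y) \<in> edges\<^sup>*}"
  have "?R `` {x} = component x" if "x \<in> S" for x
    using that unfolding component_def by blast
  thus ?thesis unfolding gamma_components_def quotient_def by (auto simp del: Image_singleton_iff)
qed

lemma component_self: "x \<in> S \<Longrightarrow> x \<in> component x"
  unfolding component_def by auto

lemma component_adj: "y \<in> component x \<Longrightarrow> adj y z \<Longrightarrow> z \<in> component x"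
  unfolding component_def using adj_simplices
  by (auto intro: rtrancl_into_rtrancl)

lemma component_eq: "y \<in> component x \<Longrightarrow> component y = component x"
proof -
  assume "y \<in> component x"
  hence xy: "(x, y) \<in> edges\<^sup>*" unfolding component_def by simp
  have "sym edges" unfolding sym_def using adj_sym by auto
  hence "(y, x) \<in> edges\<^sup>*" using xy sym_rtrancl unfolding sym_def by blast
  thus ?thesis using xy unfolding component_def by (auto intro: rtrancl_trans)
qed

lemma sign_reversing_abs_eq:
  assumes "sign_reversing f" "(x, y) \<in> edges\<^sup>*"
  shows "\<bar>f y\<bar> = \<bar>f x\<bar>"
  using assms(2)
proof (induction rule: rtrancl_induct)
  case (step y z)
  hence "f y = - edge_sign y z * f z" using assms(1) unfolding sign_reversing_def by blast
  thus ?case using step.IH abs_edge_sign[of y z] by (simp add: abs_mult)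
qed simp

definition antibalancing_switch :: "'a set set \<Rightarrow> ('a set \<Rightarrow> real) \<Rightarrow> bool" where
  "antibalancing_switch C \<theta> \<longleftrightarrow> (\<forall>x\<in>C. \<theta> x = 1 \<or> \<theta> x = -1) \<and>
     (\<forall>x\<in>C. \<forall>y\<in>C. adj x y \<longrightarrow> \<theta> x * edge_sign x y * \<theta> y = -1)"

lemma antibalanced_iff_switch: "antibalanced \<Sigma> d ori C \<longleftrightarrow> (\<exists>\<theta>. antibalancing_switch C \<theta>)"
  unfolding antibalanced_def antibalancing_switch_def ..

lemma antibalancing_switch_step:
  assumes "antibalancing_switch C \<theta>" "x \<in> C" "y \<in> C" "adj x y"
  shows "\<theta> x = - edge_sign x y * \<theta> y"
proof -
  have "\<theta> x * edge_sign x y * \<theta> y = -1" and \<theta>y: "\<theta> y * \<theta> y = 1"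
    using assms unfolding antibalancing_switch_def by auto
  have "\<theta> x = \<theta> x * (edge_sign x y * edge_sign x y) * (\<theta> y * \<theta> y)"
    by (simp add: edge_sign_square \<theta>y)
  also have "\<dots> = (\<theta> x * edge_sign x y * \<theta> y) * edge_sign x y * \<theta> y" by (simp add: mult_ac)
  finally show ?thesis using \<open>\<theta> x * edge_sign x y * \<theta> y = -1\<close> by simp
qed

lemma sign_reversing_switch_const:
  assumes f: "sign_reversing f" and \<theta>: "antibalancing_switch (component x) \<theta>"
    and y: "y \<in> component x"
  shows "f y * \<theta> y = f x * \<theta> x"
proof -
  have "(x, y) \<in> edges\<^sup>*" using y unfolding component_def by auto
  thus ?thesis
  proof (induction rule: rtrancl_induct)
    case (step y z)
    have "adj y z" using step.hyps(2) by simp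
    hence "y \<in> component x"
      using step.hyps(1) adj_simplices unfolding component_def by blast
    hence yz: "y \<in> component x" "z \<in> component x" "adj y z"
      using component_adj[OF _ \<open>adj y z\<close>] \<open>adj y z\<close> by auto
    have "f y = - edge_sign y z * f z" using f yz(3) unfolding sign_reversing_def by blast
    moreover have "\<theta> y = - edge_sign y z * \<theta> z" using antibalancing_switch_step[OF \<theta> yz] .
    ultimately have "f y * \<theta> y = (edge_sign y z * edge_sign y z) * (f z * \<theta> z)" by (simp add: mult_ac)
    thus ?case using step.IH by (simp add: edge_sign_square)
  qed simp
qed

text \<open>\<open>\<bar>f\<bar>\<close> is constant on the component, so the signs of \<open>f\<close> form an antibalancing
  switch.\<close>
lemma sign_reversing_nonzero_antibalanced:
  assumes f: "sign_reversing f" and "x \<in> S" "f x \<noteq> 0"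
  shows "antibalanced \<Sigma> d ori (component x)"
proof -
  define \<theta> where "\<theta> y = (if f y > 0 then 1 else -1 :: real)" for y
  have f_eq: "f y = \<theta> y * \<bar>f x\<bar>" if "y \<in> component x" for y
  proof -
    have "\<bar>f y\<bar> = \<bar>f x\<bar>"
      using that sign_reversing_abs_eq[OF f] unfolding component_def by auto
    thus ?thesis using \<open>f x \<noteq> 0\<close> unfolding \<theta>_def by auto
  qed
  have "\<theta> y * edge_sign y z * \<theta> z = -1"
    if yz: "y \<in> component x" "z \<in> component x" "adj y z" for y z
  proof -
    have "\<theta> y * \<bar>f x\<bar> = (- edge_sign y z * \<theta> z) * \<bar>f x\<bar>"
      using f yz f_eq[OF yz(1)] f_eq[OF yz(2)] unfolding sign_reversing_def by auto
    hence "\<theta> y = - edge_sign y z * \<theta> z"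
      using \<open>f x \<noteq> 0\<close> mult_right_cancel[of "\<bar>f x\<bar>"] by (simp only: abs_eq_0 simp_thms)
    moreover have "\<theta> z * \<theta> z = 1" unfolding \<theta>_def by simp
    ultimately show ?thesis by (simp add: mult_ac edge_sign_square)
  qed
  moreover have "\<theta> y = 1 \<or> \<theta> y = -1" for y unfolding \<theta>_def by simp
  ultimately have "antibalancing_switch (component x) \<theta>"
    unfolding antibalancing_switch_def by blast
  thus ?thesis using antibalanced_iff_switch by blast
qed

lemma antibalancing_switch_sign_reversing:
  assumes \<theta>: "antibalancing_switch (component x) \<theta>"
  shows "sign_reversing (\<lambda>y. if y \<in> component x then \<theta> y else 0)"
  unfolding sign_reversing_def
proof (intro allI impI)
  fix y z assume yz: "adj y z"
  have "y \<in> component x \<longleftrightarrow> z \<in> component x"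
    using component_adj yz adj_sym by blast
  moreover have "\<theta> y = - edge_sign y z * \<theta> z" if "y \<in> component x" "z \<in> component x"
    using antibalancing_switch_step[OF \<theta> that yz] .
  ultimately show "(if y \<in> component x then \<theta> y else 0) =
      - edge_sign y z * (if z \<in> component x then \<theta> z else 0)"
    by simp
qed

end

section \<open>The normalized up-Laplacian\<close>

locale up_laplacian_complex = oriented_complex +
  assumes deg_pos: "\<forall>\<tau>\<in>simplices \<Sigma> d. deg \<Sigma> d \<tau> > 0"
begin

abbreviation xs :: "'a set list" where "xs \<equiv> simplex_list \<Sigma> d"
abbreviation n :: nat where "n \<equiv> length xs"
abbreviation L :: "real mat" where "L \<equiv> up_laplacian \<Sigma> d ori"

lemma simplex_list: "distinct xs" "set xs = S"
proof -
  have "\<exists>ys. distinct ys \<and> set ys = S" using finite_distinct_list[OF finite_simplices] by metis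
  from someI_ex[OF this] show "distinct xs" "set xs = S" unfolding simplex_list_def by auto
qed

lemma bij_betw_nth: "bij_betw ((!) xs) {..<n} S"
proof -
  have "inj_on ((!) xs) {..<n}" using simplex_list(1) by (simp add: inj_on_def nth_eq_iff_index_eq)
  moreover have "(!) xs ` {..<n} = S" using simplex_list(2) by (auto simp: set_conv_nth)
  ultimately show ?thesis unfolding bij_betw_def by simp
qed

definition index :: "'a set \<Rightarrow> nat" where
  "index \<tau> = the_inv_into {..<n} ((!) xs) \<tau>"

lemma index_less: "\<tau> \<in> S \<Longrightarrow> index \<tau> < n"
  unfolding index_def using bij_betwE[OF bij_betw_the_inv_into[OF bij_betw_nth]] by auto

lemma nth_index: "\<tau> \<in> S \<Longrightarrow> xs ! index \<tau> = \<tau>"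
  unfolding index_def using f_the_inv_into_f_bij_betw[OF bij_betw_nth] by auto

lemma index_nth: "i < n \<Longrightarrow> index (xs ! i) = i"
  unfolding index_def using bij_betw_nth by (simp add: bij_betw_def the_inv_into_f_f)

lemma nth_simplex: "i < n \<Longrightarrow> xs ! i \<in> S"
  using simplex_list(2) nth_mem by blast

lemma deg_nth_pos: "i < n \<Longrightarrow> real (deg \<Sigma> d (xs ! i)) > 0"
  using deg_pos nth_simplex by auto

lemma L_carrier: "L \<in> carrier_mat n n"
  unfolding up_laplacian_def Let_def by simp

lemma L_entry: "i < n \<Longrightarrow> j < n \<Longrightarrow>
    L $$ (i,j) = (1 / real (deg \<Sigma> d (xs ! i))) * (\<Sum>\<sigma>\<in>T. inc (xs ! i) \<sigma> * inc (xs ! j) \<sigma>)"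
  unfolding up_laplacian_def Let_def by simp

lemma L_weighted_symmetric: "weighted_symmetric n (\<lambda>i. real (deg \<Sigma> d (xs ! i))) L"
  using L_carrier deg_nth_pos by unfold_locales (simp_all add: L_entry mult.commute)

definition vec_fun :: "real vec \<Rightarrow> 'a set \<Rightarrow> real" where
  "vec_fun v \<tau> = v $ index \<tau>"

lemma vec_fun_nth: "i < n \<Longrightarrow> vec_fun v (xs ! i) = v $ i"
  unfolding vec_fun_def by (simp add: index_nth)

lemma L_mult_vec_index:
  assumes v: "v \<in> carrier_vec n" and i: "i < n"
  shows "(L *\<^sub>v v) $ i = up_operator (vec_fun v) (xs ! i) / real (deg \<Sigma> d (xs ! i))"
proof -
  have coboundary: "(\<Sum>j<n. inc (xs ! j) \<sigma> * v $ j) = coboundary (vec_fun v) \<sigma>" for \<sigma>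
    unfolding coboundary_def sum.reindex_bij_betw[OF bij_betw_nth, symmetric]
    by (simp add: vec_fun_nth)
  have "(L *\<^sub>v v) $ i = (\<Sum>j<n. (1 / real (deg \<Sigma> d (xs ! i))) *
      (\<Sum>\<sigma>\<in>T. inc (xs ! i) \<sigma> * (inc (xs ! j) \<sigma> * v $ j)))"
    unfolding mult_mat_vec_index_sum[OF L_carrier v i]
    by (intro sum.cong refl) (simp only: L_entry i lessThan_iff sum_distrib_right mult.assoc)
  also have "\<dots> = (1 / real (deg \<Sigma> d (xs ! i))) *
      (\<Sum>\<sigma>\<in>T. \<Sum>j<n. inc (xs ! i) \<sigma> * (inc (xs ! j) \<sigma> * v $ j))"
    by (simp only: sum_distrib_left sum.swap[of _ "{..<n}"])
  also have "\<dots> = (1 / real (deg \<Sigma> d (xs ! i))) *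
      (\<Sum>\<sigma>\<in>T. inc (xs ! i) \<sigma> * (\<Sum>j<n. inc (xs ! j) \<sigma> * v $ j))"
    by (simp only: sum_distrib_left)
  finally show ?thesis unfolding coboundary up_operator_def by simp
qed

lemma kernel_char_matrix_iff:
  assumes v: "v \<in> carrier_vec n"
  shows "char_matrix L (real d + 2) *\<^sub>v v = 0\<^sub>v n \<longleftrightarrow> sign_reversing (vec_fun v)"
proof -
  let ?C = "char_matrix L (real d + 2)"
  have "?C \<in> carrier_mat n n" using L_carrier by simp
  hence "?C *\<^sub>v v = 0\<^sub>v n \<longleftrightarrow> (\<forall>i<n. (?C *\<^sub>v v) $ i = 0)"
    by (auto simp del: index_mult_mat_vec intro!: eq_vecI)
  also have "\<dots> \<longleftrightarrow> (\<forall>i<n. up_operator (vec_fun v) (xs ! i) =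
      (real d + 2) * real (deg \<Sigma> d (xs ! i)) * vec_fun v (xs ! i))"
  proof (intro all_cong imp_cong refl)
    fix i assume i: "i < n"
    have "real (deg \<Sigma> d (xs ! i)) \<noteq> 0" using deg_nth_pos[OF i] by simp
    thus "(?C *\<^sub>v v) $ i = 0 \<longleftrightarrow> up_operator (vec_fun v) (xs ! i) =
        (real d + 2) * real (deg \<Sigma> d (xs ! i)) * vec_fun v (xs ! i)"
      unfolding char_matrix_mult_vec_index[OF L_carrier v i] L_mult_vec_index[OF v i] vec_fun_nth[OF i]
      by (auto simp: field_simps)
  qed
  also have "\<dots> \<longleftrightarrow> (\<forall>\<tau>\<in>S. up_operator (vec_fun v) \<tau> = (real d + 2) * real (deg \<Sigma> d \<tau>) * vec_fun v \<tau>)"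
  proof
    assume "\<forall>i<n. up_operator (vec_fun v) (xs ! i) =
      (real d + 2) * real (deg \<Sigma> d (xs ! i)) * vec_fun v (xs ! i)"
    thus "\<forall>\<tau>\<in>S. up_operator (vec_fun v) \<tau> = (real d + 2) * real (deg \<Sigma> d \<tau>) * vec_fun v \<tau>"
      using index_less nth_index by metis
  qed (use nth_simplex in blast)
  also have "\<dots> \<longleftrightarrow> sign_reversing (vec_fun v)"
    unfolding up_operator_eigen_iff_facet_constant facet_constant_iff_sign_reversing ..
  finally show ?thesis .
qed

definition antibalanced_components :: "'a set set set" where
  "antibalanced_components = {C \<in> gamma_components \<Sigma> d. antibalanced \<Sigma> d ori C}"

definition switch :: "'a set set \<Rightarrow> 'a set \<Rightarrow> real" where
  "switch C = (SOME \<theta>. antibalancing_switch C \<theta>)"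

definition component_vec :: "'a set set \<Rightarrow> real vec" where
  "component_vec C = vec n (\<lambda>i. if xs ! i \<in> C then switch C (xs ! i) else 0)"

lemma antibalanced_componentsE:
  assumes "C \<in> antibalanced_components"
  obtains x where "x \<in> S" "C = component x" "antibalancing_switch C (switch C)"
proof -
  have "\<exists>\<theta>. antibalancing_switch C \<theta>"
    using assms antibalanced_iff_switch unfolding antibalanced_components_def by blast
  hence "antibalancing_switch C (switch C)" unfolding switch_def by (rule someI_ex)
  thus ?thesis
    using that assms unfolding antibalanced_components_def gamma_components_eq by blast
qed

lemma antibalanced_components_eq:
  assumes "C \<in> antibalanced_components" "y \<in> C"
  shows "C = component y"
proof -
  obtain x where "C = component x" using assms(1) by (rule antibalanced_componentsE)
  thus ?thesis using component_eq assms(2) by simp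
qed

lemma finite_antibalanced_components: "finite antibalanced_components"
  unfolding antibalanced_components_def gamma_components_eq
  using finite_simplices by simp

lemma component_vec_index:
  "i < n \<Longrightarrow> component_vec C $ i = (if xs ! i \<in> C then switch C (xs ! i) else 0)"
  unfolding component_vec_def by simp

lemma component_vec_nonzero_iff:
  assumes "C \<in> antibalanced_components" "i < n"
  shows "component_vec C $ i \<noteq> 0 \<longleftrightarrow> xs ! i \<in> C"
proof -
  obtain x where "antibalancing_switch C (switch C)"
    using assms(1) by (rule antibalanced_componentsE)
  hence "switch C (xs ! i) \<noteq> 0" if "xs ! i \<in> C"
    using that unfolding antibalancing_switch_def by fastforce
  thus ?thesis using component_vec_index[OF assms(2)] by auto
qed

lemma vec_fun_component_vec:
  "\<tau> \<in> S \<Longrightarrow> vec_fun (component_vec C) \<tau> = (if \<tau> \<in> C then switch C \<tau> else 0)"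
  unfolding vec_fun_def using index_less nth_index component_vec_index by simp

lemma component_vec_kernel:
  assumes "C \<in> antibalanced_components"
  shows "component_vec C \<in> mat_kernel (char_matrix L (real d + 2))"
proof -
  obtain x where "C = component x" "antibalancing_switch C (switch C)"
    using assms by (rule antibalanced_componentsE)
  hence "sign_reversing (\<lambda>\<tau>. if \<tau> \<in> C then switch C \<tau> else 0)"
    using antibalancing_switch_sign_reversing by simp
  moreover have "sign_reversing (vec_fun (component_vec C)) \<longleftrightarrow>
      sign_reversing (\<lambda>\<tau>. if \<tau> \<in> C then switch C \<tau> else 0)"
    by (rule sign_reversing_cong) (rule vec_fun_component_vec)
  ultimately have "sign_reversing (vec_fun (component_vec C))" by simp
  moreover have "component_vec C \<in> carrier_vec n" unfolding component_vec_def by simp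
  ultimately show ?thesis
    using kernel_char_matrix_iff L_carrier by (intro mat_kernelI) auto
qed

lemma inj_on_component_vec: "inj_on component_vec antibalanced_components"
proof (rule inj_onI)
  fix C C' assume C: "C \<in> antibalanced_components" and C': "C' \<in> antibalanced_components"
    and eq: "component_vec C = component_vec C'"
  obtain x where x: "x \<in> S" "C = component x" using C by (rule antibalanced_componentsE)
  have "x \<in> C" using component_self[OF x(1)] x(2) by simp
  hence "component_vec C' $ index x \<noteq> 0"
    using component_vec_nonzero_iff[OF C] index_less[OF x(1)] nth_index[OF x(1)] eq by simp
  hence "x \<in> C'"
    using component_vec_nonzero_iff[OF C'] index_less[OF x(1)] nth_index[OF x(1)] by simp
  thus "C = C'" using antibalanced_components_eq[OF C'] x(2) by simp
qed

lemma mat_kernel_char_matrix_iff: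
  "u \<in> mat_kernel (char_matrix L (real d + 2)) \<longleftrightarrow> u \<in> carrier_vec n \<and> sign_reversing (vec_fun u)"
proof -
  have "char_matrix L (real d + 2) \<in> carrier_mat n n" using L_carrier by simp
  thus ?thesis using kernel_char_matrix_iff by (auto simp: mat_kernel_def)
qed

lemma component_vec_neq_zero:
  assumes "C \<in> antibalanced_components"
  shows "component_vec C \<noteq> 0\<^sub>v n"
proof -
  obtain x where x: "x \<in> S" "C = component x" using assms by (rule antibalanced_componentsE)
  have "x \<in> C" using component_self[OF x(1)] x(2) by simp
  hence "component_vec C $ index x \<noteq> 0"
    using component_vec_nonzero_iff[OF assms] index_less[OF x(1)] nth_index[OF x(1)] by simp
  thus ?thesis using index_less[OF x(1)] by auto
qed

lemma component_vec_disjoint: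
  assumes "C \<in> antibalanced_components" "C' \<in> antibalanced_components" "C \<noteq> C'" "i < n"
  shows "component_vec C $ i = 0 \<or> component_vec C' $ i = 0"
proof -
  have "xs ! i \<notin> C \<or> xs ! i \<notin> C'"
    using antibalanced_components_eq[OF assms(1)] antibalanced_components_eq[OF assms(2)] assms(3)
    by auto
  thus ?thesis
    using component_vec_nonzero_iff[OF assms(1,4)] component_vec_nonzero_iff[OF assms(2,4)] by auto
qed

text \<open>On \<open>C\<close>, a kernel vector times the switch is constant.\<close>
lemma kernel_proportional_component_vec:
  assumes u: "u \<in> mat_kernel (char_matrix L (real d + 2))" and C: "C \<in> antibalanced_components"
  shows "\<exists>c. \<forall>i<n. component_vec C $ i \<noteq> 0 \<longrightarrow> u $ i = c * component_vec C $ i"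
proof -
  obtain x where x: "x \<in> S" "C = component x" and \<theta>: "antibalancing_switch C (switch C)"
    using C by (rule antibalanced_componentsE)
  have f: "sign_reversing (vec_fun u)" using u mat_kernel_char_matrix_iff by simp
  have "u $ i = (vec_fun u x * switch C x) * component_vec C $ i"
    if i: "i < n" "component_vec C $ i \<noteq> 0" for i
  proof -
    let ?\<theta> = "switch C (xs ! i)"
    have xi: "xs ! i \<in> C" using component_vec_nonzero_iff[OF C i(1)] i(2) by simp
    have "vec_fun u (xs ! i) * ?\<theta> = vec_fun u x * switch C x"
      using sign_reversing_switch_const[OF f, of x "switch C" "xs ! i"] \<theta> xi
      unfolding x(2) by simp
    hence const: "u $ i * ?\<theta> = vec_fun u x * switch C x" unfolding vec_fun_nth[OF i(1)] .
    have "?\<theta> * ?\<theta> = 1" using \<theta> xi unfolding antibalancing_switch_def by auto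
    have w_i: "component_vec C $ i = ?\<theta>" using component_vec_index[OF i(1)] xi by simp
    have "u $ i = u $ i * (?\<theta> * ?\<theta>)" using \<open>?\<theta> * ?\<theta> = 1\<close> by simp
    also have "\<dots> = (vec_fun u x * switch C x) * component_vec C $ i"
      by (simp only: mult.assoc[symmetric] const w_i)
    finally show ?thesis .
  qed
  thus ?thesis by blast
qed

lemma kernel_support_antibalanced:
  assumes u: "u \<in> mat_kernel (char_matrix L (real d + 2))" and i: "i < n" "u $ i \<noteq> 0"
  shows "component (xs ! i) \<in> antibalanced_components"
proof -
  have "sign_reversing (vec_fun u)" using u mat_kernel_char_matrix_iff by simp
  hence "antibalanced \<Sigma> d ori (component (xs ! i))"
    using sign_reversing_nonzero_antibalanced nth_simplex[OF i(1)] vec_fun_nth[OF i(1)] i(2)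
    by simp
  thus ?thesis
    unfolding antibalanced_components_def gamma_components_eq using nth_simplex[OF i(1)] by simp
qed

lemma kernel_dim_char_matrix:
  "kernel_dim (char_matrix L (real d + 2)) = card antibalanced_components"
proof -
  let ?C = "char_matrix L (real d + 2)"
  let ?B = "component_vec ` antibalanced_components"
  have "kernel_dim ?C = card ?B"
  proof (rule kernel_dim_eq_card_disjoint_supports)
    show "?C \<in> carrier_mat n n" using L_carrier by simp
    show "finite ?B" using finite_antibalanced_components by simp
    show "?B \<subseteq> mat_kernel ?C" using component_vec_kernel by blast
    show "0\<^sub>v n \<notin> ?B"
    proof
      assume "0\<^sub>v n \<in> ?B"
      then obtain C where "C \<in> antibalanced_components" "0\<^sub>v n = component_vec C" ..
      thus False using component_vec_neq_zero by metis
    qed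
    show "v $ i = 0 \<or> w $ i = 0" if "v \<in> ?B" "w \<in> ?B" "v \<noteq> w" "i < n" for v w i
      using that component_vec_disjoint by blast
    show "\<exists>c. \<forall>i<n. w $ i \<noteq> 0 \<longrightarrow> u $ i = c * w $ i" if "u \<in> mat_kernel ?C" "w \<in> ?B" for u w
      using that kernel_proportional_component_vec by blast
    show "\<exists>w\<in>?B. w $ i \<noteq> 0" if "u \<in> mat_kernel ?C" "i < n" "u $ i \<noteq> 0" for u i
    proof -
      have "component (xs ! i) \<in> antibalanced_components"
        using kernel_support_antibalanced that by blast
      moreover have "xs ! i \<in> component (xs ! i)" using component_self nth_simplex[OF that(2)] .
      ultimately show ?thesis using component_vec_nonzero_iff[OF _ that(2)] by blast
    qed
  qed
  thus ?thesis using card_image[OF inj_on_component_vec] by simp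
qed

end

theorem mainTheorem3:
  fixes \<Sigma> :: "'a::linorder set set" and d :: nat and ori :: "'a set \<Rightarrow> real"
  assumes "simplicial_complex \<Sigma>"
    and "orientation ori"
    and "\<forall>\<tau>\<in>simplices \<Sigma> d. deg \<Sigma> d \<tau> > 0"
  shows "(eigenvalue (up_laplacian \<Sigma> d ori) (real d + 2) \<longleftrightarrow>
           (\<exists>C\<in>gamma_components \<Sigma> d. antibalanced \<Sigma> d ori C)) \<and>
         order (real d + 2) (char_poly (up_laplacian \<Sigma> d ori)) =
           card {C \<in> gamma_components \<Sigma> d. antibalanced \<Sigma> d ori C}"
proof -
  interpret up_laplacian_complex \<Sigma> d ori by unfold_locales (use assms in auto)
  interpret weighted_symmetric n "\<lambda>i. real (deg \<Sigma> d (xs ! i))" L by (rule L_weighted_symmetric)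
  have order: "order (real d + 2) (char_poly L) = card antibalanced_components"
    using order_char_poly_eq_kernel_dim kernel_dim_char_matrix by simp
  have "char_poly L \<noteq> 0" using degree_monic_char_poly[OF L_carrier] by auto
  hence "eigenvalue L (real d + 2) \<longleftrightarrow> order (real d + 2) (char_poly L) \<noteq> 0"
    using eigenvalue_root_char_poly[OF L_carrier] order_root by blast
  also have "\<dots> \<longleftrightarrow> antibalanced_components \<noteq> {}"
    using order finite_antibalanced_components by simp
  finally show ?thesis using order unfolding antibalanced_components_def by blast
qed

end
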